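(* Let $n\geq0$ and $F\in\mathbf{F}(n)$. Then $f_F=\sum_{G\in\mathbf{F}(n),\,G\leq m(F)}\mu(G,m(F))\,G$.
   Context: Let $K$ be a field. Planar rooted trees have their children linearly ordered left to right; a planar forest is a finite, possibly empty, sequence $t_1\cdots t_n$ of planar rooted trees ($1$ = empty forest); $\mathbf{F}(n)$ is the (finite) set of planar forests with $n$ vertices. $\mathcal{H}$ is the free associative unital $K$-algebra on planar rooted trees, with basis the planar forests and product concatenation. $B^+(F)$ is the tree obtained by grafting the trees of $F$ on a new common root; $\varepsilon(F)=\delta_{F,1}$. $\Delta$ is the unique linear map with $\Delta(1)=1\otimes1$, $\Delta(xy)=(x\otimes1)\Delta(y)+\Delta(x)(1\otimes y)-x\otimes y$, $\Delta(B^+(x))=B^+(x)\otimes 1+(\mathrm{Id}\otimes B^+)\Delta(x)$. $\gamma$ is linear with $\gamma(t_1\cdots t_n)=\delta_{t_1,\bullet}t_2\cdots t_n$ ($\bullet$ the one-vertex tree), $\gamma(1)=0$. $\langle-,-\rangle$ is the unique bilinear form with $\langle1,x\rangle=\varepsilon(x)$, $\langle xy,z\rangle=\langle y\otimes x,\Delta(z)\rangle$ (with $\langle a\otimes b,c\otimes d\rangle=\langle a,c\rangle\langle b,d\rangle$), $\langle B^+(x),y\rangle=\langle x,\gamma(y)\rangle$; it is non-degenerate and forests of different weights are orthogonal; $(f_F)$ is the dual basis: $\langle f_F,G\rangle=\delta_{F,G}$ for all forests $G$. $m$ is the map on planar forests defined recursively by $m(1)=1$, $m(B^+(F_1)F_2)=B^+(m(F_2))m(F_1)$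 (it preserves the number of vertices). Order on forests: an admissible transformation chooses a vertex $s$ which is the leftmost child of its parent $u$; if $u$ is not a root, with parent $r$, the subtree rooted at $s$ is moved to become a child of $r$ immediately to the left of $u$; if $u$ is a root, the subtree rooted at $s$ becomes a new tree immediately to the left of the tree of $u$; everything else unchanged. $F\leq G$ iff $G$ is obtained from $F$ by a finite (possibly empty) sequence of admissible transformations; this is a partial order on each $\mathbf{F}(n)$. $\mu:\mathbf{F}(n)^2\to K$ is the Möbius function of the poset $(\mathbf{F}(n),\leq)$: $\mu(F,G)=0$ if $F\not\leq G$, and $\sum_{G:\,F\leq G\leq H}\mu(F,G)=\delta_{F,H}$ whenever $F\leq H$. *)

theory Defs
  imports Main
begin

text \<open>A planar rooted tree is a root with an ordered (left to right) list of
children subtrees; a planar forest is a list of planar trees (empty list = 1).\<close>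

datatype ptree = Node "ptree list"

type_synonym forest = "ptree list"

text \<open>B+ (grafting on a new root) is the constructor Node; the one-vertex tree is Node [].\<close>

primrec nv :: "ptree \<Rightarrow> nat" and nvf :: "forest \<Rightarrow> nat" where
  "nv (Node F) = Suc (nvf F)"
| "nvf [] = 0"
| "nvf (t # F) = nv t + nvf F"

definition forests :: "nat \<Rightarrow> forest set" where
  "forests n = {F. nvf F = n}"

text \<open>Coefficient of A \<otimes> B in Delta(G), computed from the defining rules:
Delta(1) = 1 \<otimes> 1, and for G = t y with t = B+(x) a tree,
Delta(t y) = (t \<otimes> 1) Delta(y) + Delta(t) (1 \<otimes> y) - t \<otimes> y,
Delta(t) = t \<otimes> 1 + (Id \<otimes> B+) Delta(x).\<close>

fun delta :: "forest \<Rightarrow> forest \<Rightarrow> forest \<Rightarrow> 'a::field" where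
  "delta [] A B = (if A = [] \<and> B = [] then 1 else 0)"
| "delta (Node x # y) A B =
     (case A of [] \<Rightarrow> 0 | t' # A' \<Rightarrow> if t' = Node x then delta y A' B else 0)
   + (if length y \<le> length B \<and> drop (length B - length y) B = y then
        (let B' = take (length B - length y) B in
           (if A = [Node x] \<and> B' = [] then 1 else 0)
         + (case B' of [Node C] \<Rightarrow> delta x A C | _ \<Rightarrow> 0))
      else 0)
   - (if A = [Node x] \<and> B = y then 1 else 0)"

text \<open>Pairs of forests whose total number of vertices is w (contains the support
of Delta(G) when G has w vertices).\<close>
definition wpairs :: "nat \<Rightarrow> (forest \<times> forest) set" where
  "wpairs w = {(G1, G2). nvf G1 + nvf G2 = w}"

text \<open>The pairing on basis elements: <1,G> = eps(G); <x y, z> = <y \<otimes> x, Delta z>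
(applied with x the first tree); <B+(x), y> = <x, gamma(y)>.\<close>

fun pair :: "forest \<Rightarrow> forest \<Rightarrow> 'a::field" where
  "pair [] G = (if G = [] then 1 else 0)"
| "pair [Node x] G = (case G of [] \<Rightarrow> 0 | t1 # G2 \<Rightarrow> if t1 = Node [] then pair x G2 else 0)"
| "pair (t # t' # F) G =
     (\<Sum>(G1, G2) \<in> wpairs (nvf G). delta G G1 G2 * pair (t' # F) G1 * pair [t] G2)"

text \<open>Elements of H are finitely supported coefficient functions on forests;
the pairing extended linearly in the first argument.\<close>
definition hpair :: "(forest \<Rightarrow> 'a::field) \<Rightarrow> forest \<Rightarrow> 'a" where
  "hpair x G = (\<Sum>H \<in> {H. x H \<noteq> 0}. x H * pair H G)"

definition is_dual_basis_elem :: "forest \<Rightarrow> (forest \<Rightarrow> 'a::field) \<Rightarrow> bool" where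
  "is_dual_basis_elem F x \<longleftrightarrow> finite {H. x H \<noteq> 0} \<and>
     (\<forall>G. hpair x G = (if G = F then 1 else 0))"

fun mf :: "forest \<Rightarrow> forest" where
  "mf [] = []"
| "mf (Node F1 # F2) = Node (mf F2) # mf F1"

text \<open>Admissible transformation: in some list of siblings (the roots of the forest,
or the children of some vertex r), a vertex u = Node (s # rest) loses its leftmost
child s, which is inserted immediately to the left of u.\<close>

inductive adm :: "forest \<Rightarrow> forest \<Rightarrow> bool" where
  here: "adm (A @ Node (s # rest) # B) (A @ s # Node rest # B)"
| inside: "adm C C' \<Longrightarrow> adm (A @ Node C # B) (A @ Node C' # B)"

definition forest_le :: "forest \<Rightarrow> forest \<Rightarrow> bool" where
  "forest_le F G \<longleftrightarrow> adm\<^sup>*\<^sup>* F G"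

definition mobius :: "'b set \<Rightarrow> ('b \<Rightarrow> 'b \<Rightarrow> bool) \<Rightarrow> 'b \<Rightarrow> 'b \<Rightarrow> 'a::field" where
  "mobius S le = (THE mu.
      (\<forall>x y. \<not> (x \<in> S \<and> y \<in> S \<and> le x y) \<longrightarrow> mu x y = 0) \<and>
      (\<forall>x\<in>S. \<forall>y\<in>S. le x y \<longrightarrow>
          (\<Sum>z \<in> {z \<in> S. le x z \<and> le z y}. mu x z) = (if x = y then 1 else 0)))"

end

theory Submission
  imports Defs
begin

text \<open>The pairing is the zeta function of the order twisted by the involution \<open>m\<close>:
  \<open>\<langle>H, G\<rangle> = 1\<close> if \<open>m(H) \<le> G\<close> and \<open>0\<close> otherwise. Since \<open>m\<close> reverses the order, this says
  \<open>\<langle>H, G\<rangle> = \<zeta>(m(G), H)\<close>, so pairing \<open>\<Sum>\<^sub>H \<mu>(H, m F) H\<close> with \<open>G\<close> gives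
  \<open>\<Sum>\<^bsub>m G \<le> H \<le> m F\<^esub> \<mu>(H, m F) = \<delta>(m G, m F) = \<delta>(G, F)\<close>, using that the Moebius
  function is a two-sided inverse of \<open>\<zeta>\<close>. For \<open>H = B\<^sup>+(X) H'\<close>, where
  \<open>m(H) = B\<^sup>+(m H') m(X)\<close>, the recursive definition of the pairing turns into a sum over the
  terms \<open>G\<^sub>1 \<otimes> G\<^sub>2\<close> of \<open>\<Delta>(G)\<close> with \<open>m(H') \<le> G\<^sub>1\<close> and \<open>\<bullet> m(X) \<le> G\<^sub>2\<close>; these correspond
  exactly to the decompositions \<open>G = P B\<^sup>+(Q) V\<close> with \<open>m(H') \<le> P Q\<close> and \<open>m(X) \<le> V\<close>, of
  which there is at most one, and which exist iff \<open>m(H) \<le> G\<close>.\<close>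

section \<open>Moebius functions of finite posets\<close>

locale finite_poset =
  fixes S :: "'b set" and le :: "'b \<Rightarrow> 'b \<Rightarrow> bool"
  assumes finite_carrier: "finite S"
    and refl: "x \<in> S \<Longrightarrow> le x x"
    and antisym: "x \<in> S \<Longrightarrow> y \<in> S \<Longrightarrow> le x y \<Longrightarrow> le y x \<Longrightarrow> x = y"
    and trans: "x \<in> S \<Longrightarrow> y \<in> S \<Longrightarrow> z \<in> S \<Longrightarrow> le x y \<Longrightarrow> le y z \<Longrightarrow> le x z"
begin

abbreviation icc :: "'b \<Rightarrow> 'b \<Rightarrow> 'b set" where
  "icc x y \<equiv> {z \<in> S. le x z \<and> le z y}"

definition is_mobius :: "('b \<Rightarrow> 'b \<Rightarrow> 'a::field) \<Rightarrow> bool" where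
  "is_mobius m \<longleftrightarrow> (\<forall>x y. \<not> (x \<in> S \<and> y \<in> S \<and> le x y) \<longrightarrow> m x y = 0) \<and>
     (\<forall>x\<in>S. \<forall>y\<in>S. le x y \<longrightarrow> (\<Sum>z\<in>icc x y. m x z) = of_bool (x = y))"

lemma mobius_eq_The: "mobius S le = (THE m. is_mobius m)"
  by (simp add: mobius_def is_mobius_def)

lemma icc_psubset:
  assumes "x \<in> S" "y \<in> S" "z \<in> icc x y" "z \<noteq> y"
  shows "icc x z \<subset> icc x y"
proof
  show "icc x z \<subseteq> icc x y" using assms by (auto intro: trans[of _ z y])
  have "y \<in> icc x y" using assms trans[of x z y] refl[of y] by auto
  moreover have "y \<notin> icc x z" using assms antisym[of z y] by auto
  ultimately show "icc x z \<noteq> icc x y" by blast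
qed

function mobius_rec :: "'b \<Rightarrow> 'b \<Rightarrow> 'a::field" where
  "mobius_rec x y =
     (if x \<in> S \<and> y \<in> S \<and> le x y
      then if x = y then 1 else - (\<Sum>z \<in> icc x y - {y}. mobius_rec x z)
      else 0)"
  by auto
termination
proof (relation "measure (\<lambda>(x, y). card (icc x y))")
  fix x y z assume "x \<in> S \<and> y \<in> S \<and> le x y" "z \<in> icc x y - {y}"
  then have "icc x z \<subset> icc x y" by (intro icc_psubset) auto
  then have "card (icc x z) < card (icc x y)"
    using finite_carrier by (intro psubset_card_mono) auto
  then show "((x, z), x, y) \<in> measure (\<lambda>(x, y). card (icc x y))" by simp
qed simp

declare mobius_rec.simps [simp del]

lemma is_mobius_mobius_rec: "is_mobius mobius_rec"
  unfolding is_mobius_def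
proof (intro conjI ballI allI impI)
  fix x y assume "\<not> (x \<in> S \<and> y \<in> S \<and> le x y)"
  then show "mobius_rec x y = 0" by (subst mobius_rec.simps) (rule if_not_P)
next
  fix x y assume xy: "x \<in> S" "y \<in> S" "le x y"
  show "(\<Sum>z\<in>icc x y. mobius_rec x z) = of_bool (x = y)"
  proof (cases "x = y")
    case True
    then have "icc x y = {x}" using xy antisym refl by blast
    then show ?thesis using True xy mobius_rec.simps[of x x] by simp
  next
    case False
    have "(\<Sum>z\<in>icc x y. mobius_rec x z) = mobius_rec x y + (\<Sum>z\<in>icc x y - {y}. mobius_rec x z)"
      using xy refl[of y] finite_carrier by (intro sum.remove) auto
    also have "mobius_rec x y = - (\<Sum>z \<in> icc x y - {y}. mobius_rec x z)"
      using xy False by (subst mobius_rec.simps) simp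
    finally show ?thesis using False by simp
  qed
qed

lemma is_mobius_convolution:
  assumes "is_mobius m" "x \<in> S" "y \<in> S"
  shows "(\<Sum>z\<in>S. m x z * of_bool (le z y)) = of_bool (x = y)"
proof -
  have "(\<Sum>z\<in>S. m x z * of_bool (le z y)) = (\<Sum>z\<in>icc x y. m x z)"
    using assms(1) finite_carrier unfolding is_mobius_def
    by (intro sum.mono_neutral_cong_right) auto
  also have "\<dots> = of_bool (x = y)"
  proof (cases "le x y")
    case True then show ?thesis using assms unfolding is_mobius_def by blast
  next
    case False
    then have "icc x y = {}" using assms trans[of x _ y] by blast
    then show ?thesis unfolding \<open>icc x y = {}\<close> using False assms(2) refl by auto
  qed
  finally show ?thesis .
qed

lemma finite_poset_dual: "finite_poset S (\<lambda>x y. le y x)"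
  by unfold_locales (use finite_carrier refl antisym trans in blast)+

text \<open>A Moebius function of the dual order, transposed, is a right inverse of the zeta
  function; a left and a right inverse in the incidence algebra coincide.\<close>

lemma left_inverse_eq_right_inverse:
  assumes "is_mobius m" "finite_poset.is_mobius S (\<lambda>x y. le y x) m'"
  shows "m = (\<lambda>x y. m' y x)"
proof (intro ext)
  fix x y
  have right: "(\<Sum>z\<in>S. m' y z * of_bool (le x z)) = of_bool (x = y)" if "x \<in> S" "y \<in> S" for x y
    using finite_poset.is_mobius_convolution[OF finite_poset_dual assms(2) that(2,1)] by auto
  show "m x y = m' y x"
  proof (cases "x \<in> S \<and> y \<in> S")
    case True
    then have "m x y = (\<Sum>w\<in>S. m x w * of_bool (w = y))"
      using finite_carrier by (simp add: sum.delta')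
    also have "\<dots> = (\<Sum>w\<in>S. m x w * (\<Sum>z\<in>S. m' y z * of_bool (le w z)))"
      using True right by simp
    also have "\<dots> = (\<Sum>w\<in>S. \<Sum>z\<in>S. m x w * of_bool (le w z) * m' y z)"
      by (simp add: sum_distrib_left ac_simps)
    also have "\<dots> = (\<Sum>z\<in>S. of_bool (x = z) * m' y z)"
      using True assms(1) by (subst sum.swap) (simp add: is_mobius_convolution flip: sum_distrib_right)
    also have "\<dots> = m' y x"
      using True finite_carrier by simp
    finally show ?thesis .
  next
    case False
    then show ?thesis using assms unfolding is_mobius_def finite_poset.is_mobius_def[OF finite_poset_dual] by auto
  qed
qed

lemma is_mobius_unique:
  assumes "is_mobius m1" "is_mobius m2"
  shows "m1 = m2"
proof -
  note right = finite_poset.is_mobius_mobius_rec[OF finite_poset_dual]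
  show ?thesis
    using left_inverse_eq_right_inverse[OF assms(1) right] left_inverse_eq_right_inverse[OF assms(2) right]
    by (rule HOL.trans[OF _ sym])
qed

lemma is_mobius_mobius: "is_mobius (mobius S le)"
  unfolding mobius_eq_The
  by (rule theI[where P = is_mobius, OF is_mobius_mobius_rec]) (rule is_mobius_unique[OF _ is_mobius_mobius_rec])

lemma mobius_eq_0: "\<not> (x \<in> S \<and> y \<in> S \<and> le x y) \<Longrightarrow> mobius S le x y = 0"
  using is_mobius_mobius unfolding is_mobius_def by blast

lemma mobius_convolution_right:
  assumes "x \<in> S" "y \<in> S"
  shows "(\<Sum>z\<in>S. of_bool (le x z) * mobius S le z y) = of_bool (x = y)"
proof -
  let ?m' = "finite_poset.mobius_rec S (\<lambda>x y. le y x) :: 'b \<Rightarrow> 'b \<Rightarrow> 'a"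
  note right = finite_poset.is_mobius_mobius_rec[OF finite_poset_dual]
  have "mobius S le = (\<lambda>x y. ?m' y x)"
    by (rule left_inverse_eq_right_inverse[OF is_mobius_mobius right])
  then show ?thesis
    using finite_poset.is_mobius_convolution[OF finite_poset_dual right assms(2,1)]
    by (simp add: mult.commute eq_commute)
qed

end

lemma nv_pos: "0 < nv t"
  by (cases t) auto

lemma nvf_append [simp]: "nvf (X @ Y) = nvf X + nvf Y"
  by (induction X) auto

lemma nvf_eq_0_iff [simp]: "nvf F = 0 \<longleftrightarrow> F = []"
  by (cases F) (auto simp: nv_pos)

lemma forests_0: "forests 0 = {[]}"
  by (auto simp: forests_def)

lemma forests_Suc: "forests (Suc n) = (\<lambda>(C, F). Node C # F) ` wpairs n"
proof
  show "forests (Suc n) \<subseteq> (\<lambda>(C, F). Node C # F) ` wpairs n"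
  proof
    fix G assume "G \<in> forests (Suc n)"
    then obtain t F where "G = t # F" by (cases G) (auto simp: forests_def)
    moreover obtain C where "t = Node C" by (cases t)
    ultimately have "G = Node C # F" "nvf C + nvf F = n"
      using \<open>G \<in> forests (Suc n)\<close> by (auto simp: forests_def)
    then show "G \<in> (\<lambda>(C, F). Node C # F) ` wpairs n" by (auto simp: wpairs_def)
  qed
qed (auto simp: forests_def wpairs_def)

lemma wpairs_subset: "wpairs n \<subseteq> (\<Union>k\<le>n. forests k \<times> forests (n - k))"
  by (auto simp: wpairs_def forests_def)

lemma finite_forests: "finite (forests n)"
proof (induction n rule: less_induct)
  case (less n)
  show ?case
  proof (cases n)
    case 0
    then show ?thesis by (simp add: forests_0)
  next
    case (Suc m)
    then have "finite (wpairs m)"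
      using less by (intro finite_subset[OF wpairs_subset]) auto
    then show ?thesis by (simp add: Suc forests_Suc)
  qed
qed

lemma finite_wpairs: "finite (wpairs n)"
  using finite_forests by (intro finite_subset[OF wpairs_subset]) auto

section \<open>The order on forests\<close>

text \<open>The number of pairs (ancestor, descendant) of vertices. An admissible transformation
  removes \<open>u\<close> from the ancestors of the moved subtree, so it strictly decreases.\<close>

primrec ancestry_tree :: "ptree \<Rightarrow> nat" and ancestry :: "forest \<Rightarrow> nat" where
  "ancestry_tree (Node F) = nvf F + ancestry F"
| "ancestry [] = 0"
| "ancestry (t # F) = ancestry_tree t + ancestry F"

lemma ancestry_append [simp]: "ancestry (X @ Y) = ancestry X + ancestry Y"
  by (induction X) auto

lemma adm_nvf_ancestry: "adm F G \<Longrightarrow> nvf G = nvf F \<and> ancestry G < ancestry F"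
  by (induction rule: adm.induct) (auto simp: nv_pos)

lemma forest_le_nvf_ancestry:
  "forest_le F G \<Longrightarrow> nvf G = nvf F \<and> (F = G \<or> ancestry G < ancestry F)"
  unfolding forest_le_def
  by (induction rule: rtranclp_induct) (auto dest: adm_nvf_ancestry)

lemma forest_le_nvf: "forest_le F G \<Longrightarrow> nvf G = nvf F"
  using forest_le_nvf_ancestry by blast

lemma forest_le_refl [simp]: "forest_le F F"
  by (simp add: forest_le_def)

lemma forest_le_trans [trans]: "forest_le F G \<Longrightarrow> forest_le G H \<Longrightarrow> forest_le F H"
  unfolding forest_le_def by (rule rtranclp_trans)

lemma forest_le_antisym: "forest_le F G \<Longrightarrow> forest_le G F \<Longrightarrow> F = G"
  using forest_le_nvf_ancestry[of F G] forest_le_nvf_ancestry[of G F] by auto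

lemma finite_poset_forests: "finite_poset (forests n) forest_le"
  by unfold_locales (auto intro: finite_forests forest_le_trans forest_le_antisym)

lemma adm_imp_forest_le: "adm F G \<Longrightarrow> forest_le F G"
  by (simp add: forest_le_def)

lemma forest_le_Nil_iff [simp]: "forest_le [] G \<longleftrightarrow> G = []"
  using forest_le_nvf by fastforce

lemma adm_append_left: "adm X Y \<Longrightarrow> adm (P @ X) (P @ Y)"
proof (induction rule: adm.induct)
  case (here A s rest B)
  then show ?case using adm.here[of "P @ A" s rest B] by simp
next
  case (inside C C' A B)
  then show ?case using adm.inside[of C C' "P @ A" B] by simp
qed

lemma adm_append_right: "adm X Y \<Longrightarrow> adm (X @ P) (Y @ P)"
proof (induction rule: adm.induct)
  case (here A s rest B)
  then show ?case using adm.here[of A s rest "B @ P"] by simp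
next
  case (inside C C' A B)
  then show ?case using adm.inside[of C C' A "B @ P"] by simp
qed

lemma forest_le_adm_mono:
  assumes "\<And>X Y. adm X Y \<Longrightarrow> adm (f X) (f Y)" and "forest_le X Y"
  shows "forest_le (f X) (f Y)"
  using assms(2) unfolding forest_le_def
  by (induction rule: rtranclp_induct) (auto intro: rtranclp.rtrancl_into_rtrancl assms(1))

lemma forest_le_append: "forest_le X X' \<Longrightarrow> forest_le Y Y' \<Longrightarrow> forest_le (X @ Y) (X' @ Y')"
  using forest_le_adm_mono[of "\<lambda>X. X @ Y", OF adm_append_right]
    forest_le_adm_mono[of "\<lambda>Y. X' @ Y", OF adm_append_left]
  by (blast intro: forest_le_trans)

lemma forest_le_Node: "forest_le C C' \<Longrightarrow> forest_le [Node C] [Node C']"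
  using forest_le_adm_mono[of "\<lambda>C. [Node C]", OF adm.inside[of _ _ "[]" "[]", simplified]] .

lemma forest_le_Node_append: "forest_le [Node (P @ Q)] (P @ [Node Q])"
proof (induction P)
  case (Cons p P)
  have "forest_le [Node (p # P @ Q)] ([p] @ [Node (P @ Q)])"
    using adm.here[of "[]" p "P @ Q" "[]"] by (simp add: forest_le_def)
  also have "forest_le \<dots> ([p] @ P @ [Node Q])"
    using Cons by (intro forest_le_append) simp_all
  finally show ?case by simp
qed simp

lemma adm_append_cases:
  assumes "adm (X @ Y) Z"
  obtains X' where "Z = X' @ Y" "adm X X'" | Y' where "Z = X @ Y'" "adm Y Y'"
  using assms
proof (cases rule: adm.cases)
  case (here A s rest B)
  from here(1) obtain us where
    "X = A @ us \<and> us @ Y = Node (s # rest) # B \<or> X @ us = A \<and> Y = us @ Node (s # rest) # B"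
    by (auto simp: append_eq_append_conv2)
  then show ?thesis
  proof (elim disjE conjE)
    assume "X = A @ us" "us @ Y = Node (s # rest) # B"
    then show ?thesis
      using here(2) adm.here[of "[]" s rest B] adm.here[of A s rest "tl us"] that
      by (cases us) auto
  next
    assume "X @ us = A" "Y = us @ Node (s # rest) # B"
    then show ?thesis using here(2) adm.here[of us s rest B] that by auto
  qed
next
  case (inside C C' A B)
  from inside(1) obtain us where
    "X = A @ us \<and> us @ Y = Node C # B \<or> X @ us = A \<and> Y = us @ Node C # B"
    by (auto simp: append_eq_append_conv2)
  then show ?thesis
  proof (elim disjE conjE)
    assume "X = A @ us" "us @ Y = Node C # B"
    then show ?thesis
      using inside adm.inside[of C C' "[]" B] adm.inside[of C C' A "tl us"] that
      by (cases us) auto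
  next
    assume "X @ us = A" "Y = us @ Node C # B"
    then show ?thesis using inside adm.inside[of C C' us B] that by auto
  qed
qed

lemma adm_Node_cases:
  assumes "adm [Node Q] Y"
  obtains s rest where "Q = s # rest" "Y = [s, Node rest]" | Q' where "Y = [Node Q']" "adm Q Q'"
  using assms
proof cases
  case (here A s rest B)
  then show ?thesis using that by (cases A) auto
next
  case (inside C C' A B)
  then show ?thesis using that by (cases A) auto
qed

lemma forest_le_append_cases:
  assumes "forest_le (X @ Y) Z"
  obtains X' Y' where "Z = X' @ Y'" "forest_le X X'" "forest_le Y Y'"
proof -
  from assms have "\<exists>X' Y'. Z = X' @ Y' \<and> forest_le X X' \<and> forest_le Y Y'"
    unfolding forest_le_def
  proof (induction rule: rtranclp_induct)
    case (step Z1 Z2)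
    then obtain X' Y' where Z1: "Z1 = X' @ Y'" "adm\<^sup>*\<^sup>* X X'" "adm\<^sup>*\<^sup>* Y Y'" by blast
    from step(2)[unfolded Z1(1)] show ?case
      by (cases rule: adm_append_cases) (use Z1 in \<open>blast intro: rtranclp.rtrancl_into_rtrancl\<close>)+
  qed blast
  then show ?thesis using that by blast
qed

lemma forest_le_Node_iff:
  "forest_le [Node C] Z \<longleftrightarrow> (\<exists>P Q. Z = P @ [Node Q] \<and> forest_le C (P @ Q))"
proof
  assume "forest_le [Node C] Z"
  then have "adm\<^sup>*\<^sup>* [Node C] Z" by (simp add: forest_le_def)
  then show "\<exists>P Q. Z = P @ [Node Q] \<and> forest_le C (P @ Q)"
  proof (induction rule: rtranclp_induct)
    case base
    show ?case by (rule exI[of _ "[]"]) simp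
  next
    case (step Z1 Z2)
    then obtain P Q where Z1: "Z1 = P @ [Node Q]" "forest_le C (P @ Q)" by blast
    from step(2)[unfolded Z1(1)] show ?case
    proof (cases rule: adm_append_cases)
      case (1 P')
      have "forest_le C (P' @ Q)"
        using Z1(2) forest_le_append[OF adm_imp_forest_le[OF 1(2)] forest_le_refl]
        by (rule forest_le_trans)
      then show ?thesis using 1 by blast
    next
      case (2 Y)
      from 2(2) show ?thesis
      proof (cases rule: adm_Node_cases)
        case (1 s rest)
        then show ?thesis using 2 Z1(2) by (intro exI[of _ "P @ [s]"] exI[of _ rest]) simp
      next
        case (2 Q')
        have "forest_le C (P @ Q')"
          using Z1(2) forest_le_append[OF forest_le_refl adm_imp_forest_le[OF 2(2)]]
          by (rule forest_le_trans)
        then show ?thesis using 2 \<open>Z2 = P @ Y\<close> by blast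
      qed
    qed
  qed
next
  assume "\<exists>P Q. Z = P @ [Node Q] \<and> forest_le C (P @ Q)"
  then show "forest_le [Node C] Z"
    using forest_le_trans[OF forest_le_Node forest_le_Node_append] by blast
qed

lemma forest_le_Node_Cons_iff:
  "forest_le (Node U # V) G \<longleftrightarrow>
     (\<exists>P Q V'. G = P @ Node Q # V' \<and> forest_le U (P @ Q) \<and> forest_le V V')"
proof
  assume "forest_le (Node U # V) G"
  then have "forest_le ([Node U] @ V) G" by simp
  then obtain X' V' where G: "G = X' @ V'" "forest_le [Node U] X'" "forest_le V V'"
    by (rule forest_le_append_cases)
  then obtain P Q where "X' = P @ [Node Q]" "forest_le U (P @ Q)"
    unfolding forest_le_Node_iff by blast
  then show "\<exists>P Q V'. G = P @ Node Q # V' \<and> forest_le U (P @ Q) \<and> forest_le V V'"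
    using G by (intro exI[of _ P] exI[of _ Q] exI[of _ V']) simp
next
  assume "\<exists>P Q V'. G = P @ Node Q # V' \<and> forest_le U (P @ Q) \<and> forest_le V V'"
  then obtain P Q V' where G: "G = (P @ [Node Q]) @ V'" "forest_le U (P @ Q)" "forest_le V V'"
    by auto
  then have "forest_le ([Node U] @ V) G"
    unfolding G(1) by (intro forest_le_append) (auto simp: forest_le_Node_iff)
  then show "forest_le (Node U # V) G" by simp
qed

lemma forest_le_leaf_Cons_iff:
  "forest_le (Node [] # V) G \<longleftrightarrow> (\<exists>V'. G = Node [] # V' \<and> forest_le V V')"
  unfolding forest_le_Node_Cons_iff by auto

section \<open>The involution \<open>m\<close> reverses the order\<close>

lemma mf_mf [simp]: "mf (mf F) = F"
  by (induction F rule: mf.induct) auto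

lemma nvf_mf [simp]: "nvf (mf F) = nvf F"
  by (induction F rule: mf.induct) auto

text \<open>Under the first-child/next-sibling encoding, planar forests are binary trees, \<open>m\<close> is
  the mirror image and admissible transformations are right rotations (so \<open>\<le>\<close> is the Tamari
  order). Mirroring turns right rotations into left rotations, hence \<open>m\<close> reverses \<open>\<le>\<close>.\<close>

datatype bintree = Leaf | Bin bintree bintree

fun bintree_of :: "forest \<Rightarrow> bintree" where
  "bintree_of [] = Leaf"
| "bintree_of (Node C # F) = Bin (bintree_of C) (bintree_of F)"

fun forest_of :: "bintree \<Rightarrow> forest" where
  "forest_of Leaf = []"
| "forest_of (Bin l r) = Node (forest_of l) # forest_of r"

fun mirror :: "bintree \<Rightarrow> bintree" where
  "mirror Leaf = Leaf"
| "mirror (Bin l r) = Bin (mirror r) (mirror l)"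

inductive rotation :: "bintree \<Rightarrow> bintree \<Rightarrow> bool" where
  root: "rotation (Bin (Bin a b) c) (Bin a (Bin b c))"
| left: "rotation a a' \<Longrightarrow> rotation (Bin a c) (Bin a' c)"
| right: "rotation c c' \<Longrightarrow> rotation (Bin a c) (Bin a c')"

lemma forest_of_bintree_of [simp]: "forest_of (bintree_of F) = F"
  by (induction F rule: bintree_of.induct) auto

lemma bintree_of_mf: "bintree_of (mf F) = mirror (bintree_of F)"
  by (induction F rule: mf.induct) auto

lemma rotation_append_left:
  "rotation (bintree_of X) (bintree_of Y) \<Longrightarrow> rotation (bintree_of (A @ X)) (bintree_of (A @ Y))"
proof (induction A)
  case (Cons t A)
  then show ?case by (cases t) (auto intro: rotation.right)
qed simp

lemma adm_imp_rotation: "adm F G \<Longrightarrow> rotation (bintree_of F) (bintree_of G)"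
proof (induction rule: adm.induct)
  case (here A s rest B)
  have "rotation (bintree_of (Node (s # rest) # B)) (bintree_of (s # Node rest # B))"
    by (cases s) (auto intro: rotation.root)
  then show ?case by (rule rotation_append_left)
next
  case (inside C C' A B)
  then have "rotation (bintree_of (Node C # B)) (bintree_of (Node C' # B))"
    by (auto intro: rotation.left)
  then show ?case by (rule rotation_append_left)
qed

lemma rotation_imp_adm: "rotation a b \<Longrightarrow> adm (forest_of a) (forest_of b)"
proof (induction rule: rotation.induct)
  case (root a b c)
  then show ?case using adm.here[of "[]" "Node (forest_of a)" "forest_of b" "forest_of c"] by simp
next
  case (left a a' c)
  then show ?case using adm.inside[of "forest_of a" "forest_of a'" "[]" "forest_of c"] by simp
next
  case (right c c' a)
  then show ?case using adm_append_left[of _ _ "[Node (forest_of a)]"] by simp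
qed

lemma rotation_mirror: "rotation a b \<Longrightarrow> rotation (mirror b) (mirror a)"
  by (induction rule: rotation.induct) (auto intro: rotation.intros)

lemma adm_mf: "adm F G \<Longrightarrow> adm (mf G) (mf F)"
  using rotation_imp_adm[OF rotation_mirror[OF adm_imp_rotation]]
  by (metis bintree_of_mf forest_of_bintree_of)

lemma forest_le_mf: "forest_le F G \<Longrightarrow> forest_le (mf G) (mf F)"
  unfolding forest_le_def
  by (induction rule: rtranclp_induct) (auto intro: converse_rtranclp_into_rtranclp adm_mf)

lemma forest_le_mf_iff: "forest_le (mf F) G \<longleftrightarrow> forest_le (mf G) F"
  using forest_le_mf by fastforce

section \<open>The pairing\<close>

lemma delta_Nil_right: "(delta G A [] :: 'a::field) = of_bool (A = G)"
proof (induction G arbitrary: A)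
  case (Cons t y)
  obtain x where t: "t = Node x" by (cases t)
  show ?case
    using t Cons.IH by (cases A; cases y) (auto simp: Let_def)
qed simp

lemma suffix_iff:
  "(length y \<le> length B \<and> drop (length B - length y) B = y) \<longleftrightarrow> (\<exists>W. B = W @ y)"
  by (metis append_take_drop_id diff_diff_cancel drop_all length_append length_drop
      le_add2 append_eq_append_conv add_diff_cancel_right')

lemma delta_Node_Cons:
  "(delta (Node x # y) A B :: 'a::field) =
     (case A of [] \<Rightarrow> 0 | t' # A' \<Rightarrow> if t' = Node x then delta y A' B else 0)
   + (if \<exists>W. B = W @ y then
        of_bool (A = [Node x] \<and> B = y)
       + (case take (length B - length y) B of [Node C] \<Rightarrow> delta x A C | _ \<Rightarrow> 0)
      else 0)
   - of_bool (A = [Node x] \<and> B = y)"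
proof -
  have "(\<exists>W. B = W @ y) \<Longrightarrow> (take (length B - length y) B = []) = (B = y)"
    by auto
  then show ?thesis by (auto simp: Let_def simp flip: suffix_iff)
qed

lemma delta_leaf_Cons_right:
  "(delta G A (Node [] # B) :: 'a::field) = of_bool (\<exists>P Q. G = P @ Node Q # B \<and> A = P @ Q)"
proof (induction G arbitrary: A)
  case (Cons t y)
  obtain x where t: "t = Node x" by (cases t)
  define T :: 'a where
    "T = (case A of [] \<Rightarrow> 0 | t' # A' \<Rightarrow> if t' = Node x then delta y A' (Node [] # B) else 0)"
  have T: "T = of_bool (\<exists>P Q. A = Node x # P @ Q \<and> y = P @ Node Q # B)"
    unfolding T_def by (cases A) (auto simp: Cons.IH)
  consider "y = Node [] # B" | "y = B" | "y \<noteq> Node [] # B" "y \<noteq> B" by blast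
  then show ?case
  proof cases
    case 1
    then have "(delta (Node x # y) A (Node [] # B) :: 'a) = T"
      unfolding T_def delta_Node_Cons by auto
    then show ?thesis using 1 t T by (auto simp: Cons_eq_append_conv append_eq_Cons_conv)
  next
    case 2
    then have "(delta (Node x # y) A (Node [] # B) :: 'a) = T + delta x A []"
      unfolding T_def delta_Node_Cons by auto
    moreover have "\<not> (\<exists>P Q. A = Node x # P @ Q \<and> y = P @ Node Q # B)"
      using 2 by (auto dest: arg_cong[of _ _ length])
    ultimately show ?thesis using 2 t T
      by (auto simp: delta_Nil_right Cons_eq_append_conv append_eq_Cons_conv)
  next
    case 3
    define K where "K = take (length (Node [] # B) - length y) (Node [] # B)"
    have "(case K of [Node C] \<Rightarrow> (delta x A C :: 'a) | _ \<Rightarrow> 0) = 0" if "Node [] # B = W @ y" for W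
    proof -
      have "W \<noteq> [] \<and> (\<forall>C. W \<noteq> [Node C])" using that 3 by (cases W) auto
      moreover have "K = W" unfolding K_def that by simp
      ultimately show ?thesis by (auto split: list.split ptree.split)
    qed
    then have "(delta (Node x # y) A (Node [] # B) :: 'a) = T"
      unfolding T_def delta_Node_Cons K_def[symmetric] using 3 by auto
    then show ?thesis using 3 t T by (auto simp: Cons_eq_append_conv append_eq_Cons_conv)
  qed
qed simp

lemma Node_split_unique:
  assumes "P1 @ Node Q1 # V1 = P2 @ Node Q2 # V2" "nvf V1 = nvf V2"
  shows "P1 = P2 \<and> Q1 = Q2 \<and> V1 = V2"
proof -
  from assms(1) obtain us where
    "P1 = P2 @ us \<and> us @ Node Q1 # V1 = Node Q2 # V2 \<or> P1 @ us = P2 \<and> Node Q1 # V1 = us @ Node Q2 # V2"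
    by (auto simp: append_eq_append_conv2)
  moreover have no_gap: "us = []" if "us @ Node Q # V = Node Q' # V'" "nvf V = nvf V'"
    for us Q V Q' V'
    using that by (cases us) (auto simp: nv_pos)
  ultimately show ?thesis
  proof (elim disjE conjE)
    assume "P1 = P2 @ us" "us @ Node Q1 # V1 = Node Q2 # V2"
    with no_gap[OF this(2) assms(2)] show ?thesis by simp
  next
    assume "P1 @ us = P2" "Node Q1 # V1 = us @ Node Q2 # V2"
    with no_gap[OF this(2)[symmetric]] assms(2) show ?thesis by simp
  qed
qed

lemma sum_delta_leaf_Cons:
  "(\<Sum>(G1, G2)\<in>wpairs (nvf G). delta G G1 G2 * of_bool (forest_le U G1)
      * of_bool (forest_le (Node [] # V) G2)) = (of_bool (forest_le (Node U # V) G) :: 'a::field)"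
proof -
  define T where "T = {(P @ Q, Node [] # V') | P Q V'.
    G = P @ Node Q # V' \<and> forest_le U (P @ Q) \<and> forest_le V V'}"
  have summand: "(delta G G1 G2 :: 'a) * of_bool (forest_le U G1) * of_bool (forest_le (Node [] # V) G2)
      = of_bool ((G1, G2) \<in> T)" for G1 G2
  proof -
    have "(G1, G2) \<in> T \<longleftrightarrow> (\<exists>V'. G2 = Node [] # V' \<and> forest_le V V' \<and> forest_le U G1 \<and>
        (\<exists>P Q. G = P @ Node Q # V' \<and> G1 = P @ Q))"
      unfolding T_def by blast
    then show ?thesis
      by (cases "\<exists>V'. G2 = Node [] # V' \<and> forest_le V V'")
         (auto simp: forest_le_leaf_Cons_iff delta_leaf_Cons_right)
  qed
  have "T \<subseteq> wpairs (nvf G)"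
    by (auto simp: T_def wpairs_def)
  then have "finite T" using finite_wpairs by (rule finite_subset)
  moreover have "\<forall>p\<in>T. \<forall>q\<in>T. p = q"
  proof (intro ballI)
    fix p q assume "p \<in> T" "q \<in> T"
    then obtain P1 Q1 V1 P2 Q2 V2 where
      "p = (P1 @ Q1, Node [] # V1)" "G = P1 @ Node Q1 # V1" "forest_le V V1"
      "q = (P2 @ Q2, Node [] # V2)" "G = P2 @ Node Q2 # V2" "forest_le V V2"
      unfolding T_def by blast
    then show "p = q" using Node_split_unique[of P1 Q1 V1 P2 Q2 V2] forest_le_nvf by metis
  qed
  ultimately have "card T \<le> 1" by (simp add: card_le_Suc0_iff_eq)
  then have "card T = of_bool (T \<noteq> {})"
    using \<open>finite T\<close> card_gt_0_iff[of T] by (cases "T = {}") auto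
  moreover have "T \<noteq> {} \<longleftrightarrow> forest_le (Node U # V) G"
    unfolding forest_le_Node_Cons_iff
  proof
    assume "\<exists>P Q V'. G = P @ Node Q # V' \<and> forest_le U (P @ Q) \<and> forest_le V V'"
    then obtain P Q V' where "G = P @ Node Q # V'" "forest_le U (P @ Q)" "forest_le V V'"
      by blast
    then have "(P @ Q, Node [] # V') \<in> T" unfolding T_def by blast
    then show "T \<noteq> {}" by blast
  qed (auto simp: T_def)
  ultimately have "of_bool (forest_le (Node U # V) G) = (of_nat (card T) :: 'a)" by simp
  also have "\<dots> = (\<Sum>p\<in>wpairs (nvf G). of_bool (p \<in> T))"
    using \<open>T \<subseteq> wpairs (nvf G)\<close> finite_wpairs by (simp add: Int_absorb1)
  finally show ?thesis by (simp add: summand case_prod_beta')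
qed

lemma pair_eq_of_bool: "(pair H G :: 'a::field) = of_bool (forest_le (mf H) G)"
proof (induction H arbitrary: G rule: measure_induct_rule[of nvf])
  case (less H)
  consider "H = []" | X where "H = [Node X]" | X t F where "H = Node X # t # F"
    by (metis list.exhaust ptree.exhaust)
  then show ?case
  proof cases
    case 1
    then show ?thesis by simp
  next
    case (2 X)
    then have "(pair X G' :: 'a) = of_bool (forest_le (mf X) G')" for G'
      using less.IH[of X] by simp
    then show ?thesis using 2 by (cases G) (auto simp: forest_le_leaf_Cons_iff)
  next
    case (3 X t F)
    have "(pair (t # F) G1 :: 'a) = of_bool (forest_le (mf (t # F)) G1)" for G1
      using less.IH[of "t # F"] 3 by (simp add: nv_pos)
    moreover have "(pair [Node X] G2 :: 'a) = of_bool (forest_le (Node [] # mf X) G2)" for G2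
      using less.IH[of "[Node X]"] 3 by (simp add: nv_pos)
    ultimately show ?thesis
      using 3 sum_delta_leaf_Cons[of G "mf (t # F)" "mf X"] by (simp add: case_prod_beta')
  qed
qed

theorem corollary39:
  fixes n :: nat and F :: forest
  assumes "F \<in> forests n"
  shows "is_dual_basis_elem F
     (\<lambda>G. if G \<in> forests n \<and> forest_le G (mf F)
           then (mobius (forests n) forest_le G (mf F) :: 'a::field) else 0)"
proof -
  interpret finite_poset "forests n" forest_le by (rule finite_poset_forests)
  let ?f = "\<lambda>G. mobius (forests n) forest_le G (mf F) :: 'a"
  have mfF: "mf F \<in> forests n" using assms by (simp add: forests_def)
  have f_eq: "(\<lambda>G. if G \<in> forests n \<and> forest_le G (mf F) then ?f G else 0) = ?f"
    by (intro ext) (simp add: mobius_eq_0)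
  have supp: "{H. ?f H \<noteq> 0} \<subseteq> forests n" using mobius_eq_0 by auto
  have "hpair ?f G = of_bool (G = F)" for G
  proof -
    have "hpair ?f G = (\<Sum>H\<in>forests n. of_bool (forest_le (mf G) H) * ?f H)"
      unfolding hpair_def using supp finite_forests
      by (intro sum.mono_neutral_cong_left) (auto simp: pair_eq_of_bool forest_le_mf_iff mult.commute)
    also have "\<dots> = of_bool (G = F)"
    proof (cases "G \<in> forests n")
      case True
      then have "mf G \<in> forests n" by (simp add: forests_def)
      moreover have "mf G = mf F \<longleftrightarrow> G = F" by (metis mf_mf)
      ultimately show ?thesis using mobius_convolution_right[OF _ mfF, of "mf G"] by simp
    next
      case False
      then have "\<not> forest_le (mf G) H" if "H \<in> forests n" for H
        using that forest_le_nvf by (auto simp: forests_def)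
      moreover have "G \<noteq> F" using False assms by blast
      ultimately show ?thesis by simp
    qed
    finally show ?thesis .
  qed
  moreover have "finite {H. ?f H \<noteq> 0}" using supp finite_forests by (rule finite_subset)
  ultimately show ?thesis unfolding f_eq is_dual_basis_elem_def by simp
qed

end
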